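(* If $m$ is prime, then $\dim\mathcal{H}_{(m)}=\frac{(m-1)!-(m-1)}{m}+m-1$.
   Context: $\mathcal{H}_{(m)}$ is the quotient of the span in $\mathbb{C}[\mathbb{S}_m]$ of all $m$-cycles by the span of those generalized Vassiliev elements all of whose terms are $m$-cycles, where for $m\ge2$, $\gamma\in\mathbb{S}_{m-1}$, $q\in[m-1]\cup\{*\}$, $t\in\{0,\dots,m-1\}$, $\alpha_t\in\mathbb{S}_m$ is obtained by inserting a new point $x$ into the line $1<\dots<m-1$ in the gap between $t$ and $t+1$, relabeling in order, acting as $\gamma$ on old points except $q\mapsto x\mapsto\gamma(q)$ if $q\ne*$, $x$ fixed if $q=*$, and for a cycle $v$ of $\gamma$, $E(\gamma,q,v)=\sum_{j\in v}(\alpha_{j-1}-\alpha_j)$. *)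

theory Defs
  imports "HOL-Analysis.Analysis" "HOL-Library.Function_Algebras"
begin

text \<open>Permutations of [m] = {1..m} are functions nat => nat permuting {1..m}.
  The group algebra C[S_m] is modelled inside the complex vector space of all
  functions (nat => nat) => complex (pointwise operations); the basis element
  of a permutation p is its indicator function.\<close>

definition cscale :: "complex \<Rightarrow> ((nat \<Rightarrow> nat) \<Rightarrow> complex) \<Rightarrow> ((nat \<Rightarrow> nat) \<Rightarrow> complex)" where
  "cscale c f = (\<lambda>x. c * f x)"

definition basis_el :: "(nat \<Rightarrow> nat) \<Rightarrow> ((nat \<Rightarrow> nat) \<Rightarrow> complex)" where
  "basis_el p = (\<lambda>s. if s = p then 1 else 0)"

definition is_m_cycle :: "nat \<Rightarrow> (nat \<Rightarrow> nat) \<Rightarrow> bool" where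
  "is_m_cycle m p \<longleftrightarrow> p permutes {1..m} \<and>
     (\<forall>i\<in>{1..m}. \<forall>j\<in>{1..m}. \<exists>k. (p ^^ k) i = j)"

text \<open>v is (the point set of) a cycle of gamma in S_n (fixed points are 1-cycles).\<close>
definition is_cycle_of :: "nat \<Rightarrow> (nat \<Rightarrow> nat) \<Rightarrow> nat set \<Rightarrow> bool" where
  "is_cycle_of n \<gamma> v \<longleftrightarrow> (\<exists>i\<in>{1..n}. v = {(\<gamma> ^^ k) i | k. True})"

text \<open>Relabelling of an old point i of the line 1<...<m-1 after inserting a new
  point x in the gap between t and t+1; x itself receives label t+1.\<close>
definition new_label :: "nat \<Rightarrow> nat \<Rightarrow> nat" where
  "new_label t i = (if i \<le> t then i else i + 1)"

definition old_label :: "nat \<Rightarrow> nat \<Rightarrow> nat" where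
  "old_label t y = (if y \<le> t then y else y - 1)"

text \<open>alpha_t in S_m for gamma in S_{m-1} and q in [m-1] \<union> {*}
  (q = None stands for *, q = Some i for i in [m-1]).\<close>
definition alpha :: "nat \<Rightarrow> (nat \<Rightarrow> nat) \<Rightarrow> nat option \<Rightarrow> nat \<Rightarrow> (nat \<Rightarrow> nat)" where
  "alpha m \<gamma> q t = (\<lambda>y.
     if y = t + 1 then (case q of None \<Rightarrow> t + 1 | Some q' \<Rightarrow> new_label t (\<gamma> q'))
     else if y \<in> {1..m} then
       (if q = Some (old_label t y) then t + 1 else new_label t (\<gamma> (old_label t y)))
     else y)"

definition vass :: "nat \<Rightarrow> (nat \<Rightarrow> nat) \<Rightarrow> nat option \<Rightarrow> nat set \<Rightarrow> ((nat \<Rightarrow> nat) \<Rightarrow> complex)" where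
  "vass m \<gamma> q v = (\<Sum>j\<in>v. basis_el (alpha m \<gamma> q (j - 1)) - basis_el (alpha m \<gamma> q j))"

definition vass_cyc :: "nat \<Rightarrow> ((nat \<Rightarrow> nat) \<Rightarrow> complex) set" where
  "vass_cyc m = {vass m \<gamma> q v | \<gamma> q v.
      \<gamma> permutes {1..m-1} \<and> (q = None \<or> (\<exists>i\<in>{1..m-1}. q = Some i)) \<and>
      is_cycle_of (m - 1) \<gamma> v \<and>
      (\<forall>j\<in>v. is_m_cycle m (alpha m \<gamma> q (j - 1)) \<and> is_m_cycle m (alpha m \<gamma> q j))}"

definition cycle_span :: "nat \<Rightarrow> ((nat \<Rightarrow> nat) \<Rightarrow> complex) set" where
  "cycle_span m = module.span cscale {basis_el p | p. is_m_cycle m p}"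

text \<open>dim H_(m) = dim (span of m-cycles) - dim (span of the relations), the
  dimension of the quotient of a finite-dimensional space by a subspace.\<close>
definition dimH :: "nat \<Rightarrow> nat" where
  "dimH m = vector_space.dim cscale (cycle_span m)
            - vector_space.dim cscale (module.span cscale (vass_cyc m))"

end

theory Submission
  imports Defs "HOL-Combinatorics.Orbits" "HOL-Combinatorics.Cycles"
    "HOL-Combinatorics.Multiset_Permutations"
begin

(* Let c = (1 2 ... m). A generalized Vassiliev element all of whose terms are m-cycles
   telescopes to c p c^-1 - p for an m-cycle p, and every such difference arises. Hence
   H_(m) is the space of coinvariants of conjugation by c on the span of the m-cycles, whose
   dimension is the number of orbits. For m prime every orbit has size 1 or m; the fixed
   points are the powers c, ..., c^(m-1), and there are (m-1)! m-cycles, which gives the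
   count. *)

section \<open>Orbits of periodic maps\<close>

lemma self_in_orbit_of_periodic:
  assumes "(f ^^ n) x = x" "0 < n"
  shows "x \<in> orbit f x"
  unfolding orbit_altdef using assms by (metis (mono_tags, lifting) mem_Collect_eq)

lemma orbit_eq_of_mem:
  assumes "x \<in> orbit f x" "y \<in> orbit f x"
  shows "orbit f y = orbit f x"
  using cyclic_on_singleI[OF assms(1) refl] assms(2) by (auto simp: cyclic_on_alldef)

lemma orbit_subset_of_closed:
  assumes "f ` B \<subseteq> B" "x \<in> B"
  shows "orbit f x \<subseteq> B"
proof
  fix y assume "y \<in> orbit f x"
  then show "y \<in> B" by induct (use assms in auto)
qed

lemma image_orbit_self:
  assumes "x \<in> orbit f x"
  shows "f ` orbit f x = orbit f x"
proof
  show "f ` orbit f x \<subseteq> orbit f x" by (auto intro: orbit.step)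
  show "orbit f x \<subseteq> f ` orbit f x"
  proof
    fix y assume y: "y \<in> orbit f x"
    define k where "k = funpow_dist f (f y) y"
    have "y \<in> orbit f y" by (rule self_in_orbit_trans[OF assms y])
    then have "(f ^^ Suc k) y = y" unfolding k_def by (rule funpow_dist1_prop)
    then have "y = f ((f ^^ k) y)" by (simp only: funpow.simps(2) comp_apply)
    moreover have "(f ^^ k) y \<in> orbit f x" using y by (rule funpow_in_orbit)
    ultimately show "y \<in> f ` orbit f x" by blast
  qed
qed

lemma card_eq_sum_card_orbits:
  assumes "finite B" "f ` B \<subseteq> B" "\<And>x. x \<in> B \<Longrightarrow> x \<in> orbit f x"
  shows "card B = (\<Sum>C \<in> orbit f ` B. card C)"
proof -
  have sub: "orbit f x \<subseteq> B" if "x \<in> B" for x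
    using orbit_subset_of_closed[OF assms(2) that] .
  have "pairwise disjnt (orbit f ` B)"
  proof (rule pairwiseI)
    fix C D assume "C \<in> orbit f ` B" "D \<in> orbit f ` B" "C \<noteq> D"
    then obtain x y where xy: "x \<in> B" "y \<in> B" "C = orbit f x" "D = orbit f y" "C \<noteq> D" by blast
    have False if "z \<in> C" "z \<in> D" for z
      using orbit_eq_of_mem[OF assms(3)[OF xy(1)], of z] orbit_eq_of_mem[OF assms(3)[OF xy(2)], of z]
        that xy by simp
    then show "disjnt C D" unfolding disjnt_def by blast
  qed
  then have "card (\<Union> (orbit f ` B)) = (\<Sum>C \<in> orbit f ` B. card C)"
    by (rule card_Union_disjoint) (auto intro: finite_subset[OF sub assms(1)])
  moreover have "\<Union> (orbit f ` B) = B" using sub assms(3) by blast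
  ultimately show ?thesis by simp
qed

lemma card_orbit_dvd_period:
  assumes "(f ^^ n) x = x" "0 < n"
  shows "card (orbit f x) dvd n"
proof -
  define d where "d = funpow_dist1 f x x"
  have x: "x \<in> orbit f x" using self_in_orbit_of_periodic[OF assms] .
  have "card (orbit f x) = d"
    unfolding orbit_conv_funpow_dist1[OF x] d_def
    using card_image[OF inj_on_funpow_dist1[OF x]] by simp
  moreover have "n mod d = 0"
  proof (rule ccontr)
    assume "n mod d \<noteq> 0"
    moreover have "(f ^^ (n mod d)) x = x"
      using funpow_mod_eq[OF funpow_dist1_prop[OF x]] assms(1) unfolding d_def by simp
    ultimately show False using funpow_dist1_least[of "n mod d" f x x] unfolding d_def by simp
  qed
  ultimately show ?thesis by (simp add: mod_0_imp_dvd)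
qed

lemma card_orbit_prime_period:
  assumes "prime p" "(f ^^ p) x = x" "f x \<noteq> x"
  shows "card (orbit f x) = p"
proof -
  have "card (orbit f x) dvd p" using card_orbit_dvd_period[OF assms(2) prime_gt_0_nat[OF assms(1)]] .
  moreover have "card (orbit f x) \<noteq> 1"
  proof
    have x: "x \<in> orbit f x" using self_in_orbit_of_periodic assms(2) prime_gt_0_nat[OF assms(1)] .
    assume "card (orbit f x) = 1"
    then have "orbit f x = {x}" using x by (metis card_1_singletonE singletonD)
    then show False using orbit_eq_singleton_iff[of f x] assms(3) by simp
  qed
  ultimately show ?thesis using assms(1) by (metis prime_nat_iff)
qed

lemma card_orbits_prime_period:
  assumes "finite B" "f ` B \<subseteq> B" "prime p" "\<And>x. x \<in> B \<Longrightarrow> (f ^^ p) x = x"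
  shows "p * card (orbit f ` B) = card B + (p - 1) * card {x \<in> B. f x = x}"
proof -
  define Fix where "Fix = {x \<in> B. f x = x}"
  define Orb1 where "Orb1 = orbit f ` Fix"
  define Orb2 where "Orb2 = orbit f ` (B - Fix)"
  have self: "x \<in> orbit f x" if "x \<in> B" for x
    using self_in_orbit_of_periodic[OF assms(4)[OF that] prime_gt_0_nat[OF assms(3)]] .
  have singleton: "orbit f x = {x}" if "x \<in> Fix" for x
    using that orbit_eq_singleton_iff[of f x] unfolding Fix_def by simp
  have card1: "card C = 1" if "C \<in> Orb1" for C
    using that singleton unfolding Orb1_def by auto
  have cardp: "card C = p" if C: "C \<in> Orb2" for C
  proof -
    obtain x where "x \<in> B" "f x \<noteq> x" "C = orbit f x"
      using C unfolding Orb2_def Fix_def by blast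
    then show ?thesis using card_orbit_prime_period[OF assms(3) assms(4)] by simp
  qed
  have fin: "finite Orb1" "finite Orb2" using assms(1) unfolding Orb1_def Orb2_def Fix_def by simp_all
  have split: "orbit f ` B = Orb1 \<union> Orb2" unfolding Orb1_def Orb2_def Fix_def by auto
  have disj: "Orb1 \<inter> Orb2 = {}"
    using card1 cardp prime_gt_1_nat[OF assms(3)] by (metis disjoint_iff less_irrefl)
  have "inj_on (orbit f) Fix" using singleton by (intro inj_onI) (metis singleton_inject)
  then have "card Orb1 = card Fix" unfolding Orb1_def by (rule card_image)
  moreover have "card B = card Orb1 + p * card Orb2"
    using card_eq_sum_card_orbits[OF assms(1,2) self] fin disj card1 cardp
    by (simp add: split sum.union_disjoint)
  moreover have "card (orbit f ` B) = card Orb1 + card Orb2"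
    using split fin disj card_Un_disjoint by simp
  moreover have "p * card Orb1 = card Orb1 + (p - 1) * card Orb1"
    using prime_gt_0_nat[OF assms(3)] by (cases p) simp_all
  ultimately show ?thesis unfolding Fix_def by (simp add: add_mult_distrib2)
qed

lemma sum_orbit_differences:
  fixes e :: "'a \<Rightarrow> 'b::ab_group_add"
  assumes "x \<in> orbit f x"
  shows "(\<Sum>y \<in> orbit f x. e (f y) - e y) = 0"
proof -
  have "inj_on f (orbit f x)"
    using finite_surj_inj[OF finite_orbit[OF assms]] image_orbit_self[OF assms] by simp
  then have "(\<Sum>y \<in> orbit f x. e (f y)) = (\<Sum>y \<in> orbit f x. e y)"
    using sum.reindex[of f "orbit f x" e] image_orbit_self[OF assms] by simp
  then show ?thesis by (simp add: sum_subtractf)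
qed

section \<open>Span of the orbit differences\<close>

lemma obtain_transversal:
  obtains R where "R \<subseteq> A" "bij_betw h R (h ` A)"
proof
  let ?R = "inv_into A h ` h ` A"
  show "?R \<subseteq> A" by (auto intro: inv_into_into)
  show "bij_betw h ?R (h ` A)" unfolding bij_betw_def
  proof
    show "inj_on h ?R" by (rule inj_onI) (auto simp: f_inv_into_f)
    show "h ` ?R = h ` A" by (auto simp: f_inv_into_f image_image)
  qed
qed

text \<open>The differences along an orbit sum to zero, so an orbit O contributes at most |O| - 1
  independent ones; conversely, the differences together with one representative per orbit
  span all the e x.\<close>

context vector_space
begin

lemma orbit_in_span_differences:
  assumes "f ` B \<subseteq> B" "r \<in> B" "r \<in> orbit f r" "x \<in> orbit f r"
  shows "e x \<in> span (insert (e r) ((\<lambda>x. e (f x) - e x) ` B))"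
proof -
  let ?S = "insert (e r) ((\<lambda>x. e (f x) - e x) ` B)"
  obtain k where k: "x = (f ^^ k) r" using orbit_altdef_self_in[OF assms(3)] assms(4) by blast
  have "e ((f ^^ i) r) \<in> span ?S" for i
  proof (induction i)
    case 0
    show ?case by (simp add: span_base)
  next
    case (Suc i)
    define c where "c = (f ^^ i) r"
    have "c \<in> B"
      using funpow_in_orbit[OF assms(3)] orbit_subset_of_closed[OF assms(1,2)] unfolding c_def by blast
    then have "e (f c) - e c \<in> span ?S" by (intro span_base) blast
    then have "(e (f c) - e c) + e c \<in> span ?S" using Suc.IH span_add unfolding c_def by blast
    then show ?case unfolding c_def by simp
  qed
  then show ?thesis using k by simp
qed

lemma card_le_dim_orbit_differences_add_card_orbits:
  assumes "finite B" "f ` B \<subseteq> B" "\<And>x. x \<in> B \<Longrightarrow> x \<in> orbit f x"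
    and "independent (e ` B)" "inj_on e B"
  shows "card B \<le> dim ((\<lambda>x. e (f x) - e x) ` B) + card (orbit f ` B)"
proof -
  define G where "G = (\<lambda>x. e (f x) - e x) ` B"
  obtain R where R: "R \<subseteq> B" "bij_betw (orbit f) R (orbit f ` B)"
    using obtain_transversal .
  obtain BG where BG: "BG \<subseteq> G" "G \<subseteq> span BG" "card BG = dim G"
    using basis_exists by metis
  have "finite G" unfolding G_def using assms(1) by simp
  then have fin: "finite (BG \<union> e ` R)"
    using finite_subset[OF BG(1)] finite_subset[OF R(1) assms(1)] by simp
  have "e x \<in> span (G \<union> e ` R)" if x: "x \<in> B" for x
  proof -
    have "orbit f x \<in> orbit f ` R" using bij_betw_imp_surj_on[OF R(2)] x by simp
    then obtain r where r: "r \<in> R" "orbit f x = orbit f r" by blast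
    have rB: "r \<in> B" using r(1) R(1) by blast
    have "x \<in> orbit f r" using assms(3)[OF x] r(2) by simp
    then have "e x \<in> span (insert (e r) G)"
      unfolding G_def by (rule orbit_in_span_differences[OF assms(2) rB assms(3)[OF rB]])
    moreover have "insert (e r) G \<subseteq> G \<union> e ` R" using r(1) by blast
    ultimately show ?thesis using span_mono by blast
  qed
  moreover have "G \<union> e ` R \<subseteq> span (BG \<union> e ` R)"
    using BG(2) span_mono[of BG "BG \<union> e ` R"] span_superset[of "BG \<union> e ` R"] by blast
  then have "span (G \<union> e ` R) \<subseteq> span (BG \<union> e ` R)" by (rule span_minimal[OF _ subspace_span])
  ultimately have "dim (e ` B) \<le> card (BG \<union> e ` R)"
    using dim_le_card[OF _ fin] by blast
  moreover have "dim (e ` B) = card B"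
    using dim_eq_card_independent[OF assms(4)] card_image[OF assms(5)] by simp
  moreover have "card (BG \<union> e ` R) \<le> card BG + card R"
    using card_Un_le[of BG "e ` R"] card_image_le[OF finite_subset[OF R(1) assms(1)], of e] by linarith
  moreover have "card R = card (orbit f ` B)" using R(2) by (rule bij_betw_same_card)
  ultimately show ?thesis using BG(3) unfolding G_def by linarith
qed

lemma dim_orbit_differences_add_card_orbits_le:
  assumes "finite B" "f ` B \<subseteq> B" "\<And>x. x \<in> B \<Longrightarrow> x \<in> orbit f x"
  shows "dim ((\<lambda>x. e (f x) - e x) ` B) + card (orbit f ` B) \<le> card B"
proof -
  define g where "g x = e (f x) - e x" for x
  obtain R where R: "R \<subseteq> B" "bij_betw (orbit f) R (orbit f ` B)"
    using obtain_transversal .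
  have "g r \<in> span (g ` (B - R))" if r: "r \<in> R" for r
  proof -
    define C where "C = orbit f r"
    have rB: "r \<in> B" using r R(1) by blast
    have self: "r \<in> C" unfolding C_def using assms(3)[OF rB] .
    have CB: "C \<subseteq> B" unfolding C_def by (rule orbit_subset_of_closed[OF assms(2) rB])
    have finC: "finite C" using finite_subset[OF CB assms(1)] .
    have "C - {r} \<subseteq> B - R"
    proof
      fix c assume c: "c \<in> C - {r}"
      have orb: "orbit f c = orbit f r"
        using c orbit_eq_of_mem[OF assms(3)[OF rB], of c] unfolding C_def by simp
      have "c \<notin> R"
      proof
        assume "c \<in> R"
        with inj_onD[OF bij_betw_imp_inj_on[OF R(2)] orb _ r] have "c = r" .
        then show False using c by simp
      qed
      then show "c \<in> B - R" using c CB by blast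
    qed
    have "sum g C = 0" unfolding g_def C_def by (rule sum_orbit_differences[OF assms(3)[OF rB]])
    then have "g r = - sum g (C - {r})"
      using sum.remove[OF finC self, of g] by (simp add: eq_neg_iff_add_eq_0)
    also have "\<dots> \<in> span (g ` (B - R))"
      using \<open>C - {r} \<subseteq> B - R\<close> by (intro span_neg span_sum) (auto intro: span_base)
    finally show ?thesis .
  qed
  moreover have "g x \<in> span (g ` (B - R))" if "x \<in> B - R" for x
    using that by (intro span_base imageI)
  ultimately have "g ` B \<subseteq> span (g ` (B - R))" by blast
  then have "dim (g ` B) \<le> card (g ` (B - R))" using assms(1) by (simp add: dim_le_card)
  also have "\<dots> \<le> card (B - R)" using assms(1) by (simp add: card_image_le)
  also have "\<dots> = card B - card R" using card_Diff_subset[OF finite_subset[OF R(1) assms(1)] R(1)] .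
  finally show ?thesis
    using bij_betw_same_card[OF R(2)] card_mono[OF assms(1) R(1)] unfolding g_def by linarith
qed

lemma dim_orbit_differences_add_card_orbits:
  assumes "finite B" "f ` B \<subseteq> B" "\<And>x. x \<in> B \<Longrightarrow> x \<in> orbit f x"
    and "independent (e ` B)" "inj_on e B"
  shows "dim ((\<lambda>x. e (f x) - e x) ` B) + card (orbit f ` B) = card B"
  using card_le_dim_orbit_differences_add_card_orbits[OF assms]
    dim_orbit_differences_add_card_orbits_le[OF assms(1-3), of e] by simp

end

section \<open>Vassiliev relations between m-cycles\<close>

lemma is_m_cycle_no_fixpoint:
  assumes "is_m_cycle m p" "2 \<le> m" "y \<in> {1..m}"
  shows "p y \<noteq> y"
proof
  assume "p y = y"
  then have fixed: "(p ^^ k) y = y" for k by (induction k) simp_all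
  obtain z where "z \<in> {1..m}" "z \<noteq> y"
    using assms(2,3) by (cases "y = 1") (auto intro: that[of 1] that[of 2])
  then show False using assms(1,3) fixed unfolding is_m_cycle_def by metis
qed

lemma funpow_conj_apply:
  assumes "bij s"
  shows "((s \<circ> p \<circ> inv s) ^^ k) x = s ((p ^^ k) (inv s x))"
  by (induction k) (simp_all add: inv_f_f[OF bij_is_inj[OF assms]] surj_f_inv_f[OF bij_is_surj[OF assms]])

lemma is_m_cycle_conj:
  assumes "is_m_cycle m p" "s permutes {1..m}"
  shows "is_m_cycle m (s \<circ> p \<circ> inv s)"
  unfolding is_m_cycle_def
proof (intro conjI ballI)
  show "s \<circ> p \<circ> inv s permutes {1..m}"
    using assms permutes_inv unfolding is_m_cycle_def by (blast intro: permutes_compose)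
  fix i j assume "i \<in> {1..m}" "j \<in> {1..m}"
  then have "inv s i \<in> {1..m}" "inv s j \<in> {1..m}"
    using permutes_in_image[OF permutes_inv[OF assms(2)]] by blast+
  then obtain k where k: "(p ^^ k) (inv s i) = inv s j"
    using assms(1) unfolding is_m_cycle_def by blast
  have "((s \<circ> p \<circ> inv s) ^^ k) i = s ((p ^^ k) (inv s i))"
    using funpow_conj_apply[OF permutes_bij[OF assms(2)]] .
  also have "\<dots> = j" using k permutes_inverses(1)[OF assms(2)] by simp
  finally show "\<exists>k. ((s \<circ> p \<circ> inv s) ^^ k) i = j" ..
qed

lemma is_m_cycle_conj_iff:
  assumes "s permutes {1..m}"
  shows "is_m_cycle m (s \<circ> p \<circ> inv s) \<longleftrightarrow> is_m_cycle m p"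
proof
  have cancel: "inv s \<circ> (s \<circ> p \<circ> inv s) \<circ> inv (inv s) = p"
    using permutes_inverses[OF assms] inv_inv_eq[OF permutes_bij[OF assms]] by (simp add: fun_eq_iff)
  assume "is_m_cycle m (s \<circ> p \<circ> inv s)"
  from is_m_cycle_conj[OF this permutes_inv[OF assms]] show "is_m_cycle m p"
    unfolding cancel .
qed (use is_m_cycle_conj assms in blast)

text \<open>The cycle (t+1 t+2 ... m): it moves a point appended at the end of the line
  1 < ... < m into the gap between t and t + 1.\<close>
definition rotation :: "nat \<Rightarrow> nat \<Rightarrow> nat \<Rightarrow> nat" where
  "rotation m t y = (if y \<le> t then y else if y < m then y + 1 else if y = m then t + 1 else y)"

definition rotation_inv :: "nat \<Rightarrow> nat \<Rightarrow> nat \<Rightarrow> nat" where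
  "rotation_inv m t y = (if y \<le> t then y else if y = t + 1 then m else if y \<le> m then y - 1 else y)"

lemma rotation_permutes: "t < m \<Longrightarrow> rotation m t permutes {1..m}"
proof -
  assume "t < m"
  then have "rotation m t \<circ> rotation_inv m t = id" "rotation_inv m t \<circ> rotation m t = id"
    by (auto simp: fun_eq_iff rotation_def rotation_inv_def)
  then have "bij (rotation m t)" by (rule o_bij[rotated])
  then show ?thesis by (auto simp: permutes_def bij_iff rotation_def)
qed

lemma inv_rotation: "t < m \<Longrightarrow> inv (rotation m t) = rotation_inv m t"
  by (rule inv_unique_comp) (auto simp: fun_eq_iff rotation_def rotation_inv_def)

lemma rotation_last: "rotation m (m - 1) = id"
  by (auto simp: fun_eq_iff rotation_def)

definition conj_rotation :: "nat \<Rightarrow> (nat \<Rightarrow> nat) \<Rightarrow> (nat \<Rightarrow> nat)" where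
  "conj_rotation m p = rotation m 0 \<circ> p \<circ> inv (rotation m 0)"

text \<open>Inserting the new point x at the end of the line turns \<gamma> into \<gamma> \<circ> (q m);
  inserting it in the gap after t instead conjugates this by the rotation of the tail.\<close>
lemma alpha_Some_eq_conj:
  assumes \<gamma>: "\<gamma> permutes {1..m-1}" and q: "q \<in> {1..m-1}" and t: "t < m"
  shows "alpha m \<gamma> (Some q) t = rotation m t \<circ> (\<gamma> \<circ> Transposition.transpose q m) \<circ> inv (rotation m t)"
proof
  fix y
  have \<gamma>_in: "\<gamma> z \<in> {1..m-1}" if "z \<in> {1..m-1}" for z
    using permutes_in_image[OF \<gamma>] that by blast
  have \<gamma>_out: "\<gamma> z = z" if "z \<notin> {1..m-1}" for z
    using permutes_not_in[OF \<gamma> that] .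
  have \<gamma>_m: "\<gamma> m = m" by (rule \<gamma>_out) auto
  have rot_in: "rotation m t z = new_label t z" if "z \<in> {1..m-1}" for z
    using that by (auto simp: rotation_def new_label_def)
  have rot_m: "rotation m t m = t + 1" using t by (simp add: rotation_def)
  note inv_rot = inv_rotation[OF t]
  show "alpha m \<gamma> (Some q) t y = (rotation m t \<circ> (\<gamma> \<circ> Transposition.transpose q m) \<circ> inv (rotation m t)) y"
  proof (cases "y = t + 1")
    case True
    then have "rotation_inv m t y = m" by (simp add: rotation_inv_def)
    then show ?thesis using True rot_in[OF \<gamma>_in[OF q]] by (simp add: alpha_def inv_rot)
  next
    case y_new: False
    show ?thesis
    proof (cases "y \<in> {1..m}")
      case True
      define z where "z = old_label t y"
      have z: "z \<in> {1..m-1}" "rotation_inv m t y = z"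
        using True y_new t by (auto simp: z_def old_label_def rotation_inv_def)
      have "alpha m \<gamma> (Some q) t y = (if q = z then t + 1 else new_label t (\<gamma> z))"
        using True y_new unfolding alpha_def z_def by simp
      moreover have "(\<gamma> \<circ> Transposition.transpose q m) z = (if q = z then m else \<gamma> z)"
        using z(1) \<gamma>_m by auto
      ultimately show ?thesis using z rot_m rot_in[OF \<gamma>_in[OF z(1)]] by (simp add: inv_rot)
    next
      case False
      then have "rotation_inv m t y = y" "Transposition.transpose q m y = y" "\<gamma> y = y" "rotation m t y = y"
        using t q \<gamma>_out[of y] by (auto simp: rotation_inv_def rotation_def)
      moreover have "alpha m \<gamma> (Some q) t y = y"
        unfolding alpha_def using False y_new by (simp only: if_False)
      ultimately show ?thesis by (simp add: inv_rot)
    qed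
  qed
qed

lemma alpha_Some_last:
  assumes "\<gamma> permutes {1..m-1}" "q \<in> {1..m-1}"
  shows "alpha m \<gamma> (Some q) (m - 1) = \<gamma> \<circ> Transposition.transpose q m"
proof -
  have "m - 1 < m" using assms(2) by auto
  then show ?thesis using alpha_Some_eq_conj[OF assms] by (simp only: rotation_last inv_id comp_id id_comp)
qed

lemma alpha_Some_first:
  assumes "\<gamma> permutes {1..m-1}" "q \<in> {1..m-1}"
  shows "alpha m \<gamma> (Some q) 0 = conj_rotation m (\<gamma> \<circ> Transposition.transpose q m)"
proof -
  have "0 < m" using assms(2) by auto
  then show ?thesis using alpha_Some_eq_conj[OF assms] unfolding conj_rotation_def by blast
qed

lemma is_m_cycle_alpha_Some_iff:
  assumes "\<gamma> permutes {1..m-1}" "q \<in> {1..m-1}" "t < m"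
  shows "is_m_cycle m (alpha m \<gamma> (Some q) t) \<longleftrightarrow> is_m_cycle m (\<gamma> \<circ> Transposition.transpose q m)"
  unfolding alpha_Some_eq_conj[OF assms] using is_m_cycle_conj_iff[OF rotation_permutes[OF assms(3)]] .

text \<open>\<gamma> \<circ> (q m) agrees with \<gamma> except that it makes a detour through m right after q.\<close>
lemma comp_transpose_last_step:
  fixes m :: nat
  assumes \<gamma>: "\<gamma> permutes {1..m-1}" and i: "i \<in> {1..m-1}"
    and y: "(\<exists>k. y = (\<gamma> ^^ k) i) \<or> (y = m \<and> (\<exists>k. q = (\<gamma> ^^ k) i))"
  shows "(\<exists>k. (\<gamma> \<circ> Transposition.transpose q m) y = (\<gamma> ^^ k) i) \<or>
    ((\<gamma> \<circ> Transposition.transpose q m) y = m \<and> (\<exists>k. q = (\<gamma> ^^ k) i))"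
proof -
  have "m \<notin> {1..m-1}" by (cases m) auto
  then have \<gamma>_m: "\<gamma> m = m" by (rule permutes_not_in[OF \<gamma>])
  from y consider k where "y = (\<gamma> ^^ k) i" | k where "y = m" "q = (\<gamma> ^^ k) i" by blast
  then show ?thesis
  proof cases
    case (1 k)
    have "y \<in> {1..m-1}" using permutes_in_image[OF permutes_funpow[OF \<gamma>]] i 1 by blast
    then have "y \<noteq> m" by (cases m) auto
    show ?thesis
    proof (cases "y = q")
      case True
      then have "(\<gamma> \<circ> Transposition.transpose q m) y = m" using \<gamma>_m by simp
      then show ?thesis using True 1 by blast
    next
      case False
      then have "(\<gamma> \<circ> Transposition.transpose q m) y = (\<gamma> ^^ Suc k) i" using 1 \<open>y \<noteq> m\<close> by simp
      then show ?thesis by blast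
    qed
  next
    case (2 k)
    then have "(\<gamma> \<circ> Transposition.transpose q m) y = (\<gamma> ^^ Suc k) i" by simp
    then show ?thesis by blast
  qed
qed

lemma is_m_cycle_remove_point:
  assumes p: "is_m_cycle m (\<gamma> \<circ> Transposition.transpose q m)" and \<gamma>: "\<gamma> permutes {1..m-1}"
  shows "is_m_cycle (m - 1) \<gamma>"
  unfolding is_m_cycle_def
proof (intro conjI ballI \<gamma>)
  fix i j assume i: "i \<in> {1..m-1}" and j: "j \<in> {1..m-1}"
  let ?p = "\<gamma> \<circ> Transposition.transpose q m"
  define P where "P y \<longleftrightarrow> (\<exists>k. y = (\<gamma> ^^ k) i) \<or> (y = m \<and> (\<exists>k. q = (\<gamma> ^^ k) i))" for y
  have "P ((?p ^^ n) i)" for n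
  proof (induction n)
    case 0
    show ?case unfolding P_def by (metis funpow_0)
  next
    case (Suc n)
    then show ?case using comp_transpose_last_step[OF \<gamma> i] unfolding P_def by simp
  qed
  moreover obtain n where "(?p ^^ n) i = j" using p i j unfolding is_m_cycle_def by force
  ultimately have "P j" by blast
  then show "\<exists>k. (\<gamma> ^^ k) i = j" using j unfolding P_def by auto
qed

lemma is_cycle_of_m_cycle_iff:
  assumes \<gamma>: "is_m_cycle n \<gamma>" and n: "1 \<le> n"
  shows "is_cycle_of n \<gamma> v \<longleftrightarrow> v = {1..n}"
proof -
  have perm: "\<gamma> permutes {1..n}" using \<gamma> unfolding is_m_cycle_def by simp
  have orbit: "{(\<gamma> ^^ k) i | k. True} = {1..n}" if i: "i \<in> {1..n}" for i
  proof
    show "{(\<gamma> ^^ k) i | k. True} \<subseteq> {1..n}"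
      using permutes_in_image[OF permutes_funpow[OF perm]] i by auto
    show "{1..n} \<subseteq> {(\<gamma> ^^ k) i | k. True}"
    proof
      fix j assume "j \<in> {1..n}"
      then obtain k where "(\<gamma> ^^ k) i = j" using \<gamma> i unfolding is_m_cycle_def by blast
      then show "j \<in> {(\<gamma> ^^ k) i | k. True}" by blast
    qed
  qed
  show ?thesis
  proof
    assume "is_cycle_of n \<gamma> v"
    then obtain i where "i \<in> {1..n}" "v = {(\<gamma> ^^ k) i | k. True}"
      unfolding is_cycle_of_def by blast
    then show "v = {1..n}" using orbit by simp
  next
    assume v: "v = {1..n}"
    have "1 \<in> {1..n}" using n by simp
    then show "is_cycle_of n \<gamma> v"
      unfolding is_cycle_of_def v using orbit[symmetric] by blast
  qed
qed

lemma vass_full_line_telescope: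
  assumes "1 \<le> m"
  shows "vass m \<gamma> q {1..m-1} = basis_el (alpha m \<gamma> q 0) - basis_el (alpha m \<gamma> q (m - 1))"
proof -
  define f where "f j = basis_el (alpha m \<gamma> q j)" for j
  have "{1..m-1} = Suc ` {..<m-1}"
    using assms by (auto simp: image_iff) (metis Suc_pred' le_simps(3) lessThan_iff not_le)
  then have "vass m \<gamma> q {1..m-1} = (\<Sum>j<m-1. f j - f (Suc j))"
    unfolding vass_def f_def by (simp add: sum.reindex)
  also have "\<dots> = f 0 - f (m - 1)" by (rule sum_lessThan_telescope')
  finally show ?thesis unfolding f_def .
qed

lemma vass_cyc_subset_rotation_differences:
  assumes m: "2 \<le> m" and x: "x \<in> vass_cyc m"
  shows "x \<in> (\<lambda>p. basis_el (conj_rotation m p) - basis_el p) ` {p. is_m_cycle m p}"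
proof -
  obtain \<gamma> q v where x: "x = vass m \<gamma> q v" and \<gamma>: "\<gamma> permutes {1..m-1}"
    and q: "q = None \<or> (\<exists>i\<in>{1..m-1}. q = Some i)" and v: "is_cycle_of (m - 1) \<gamma> v"
    and cyc: "\<forall>j\<in>v. is_m_cycle m (alpha m \<gamma> q (j - 1)) \<and> is_m_cycle m (alpha m \<gamma> q j)"
    using x unfolding vass_cyc_def by blast
  obtain i where i: "i \<in> {1..m-1}" "i \<in> v"
    using v unfolding is_cycle_of_def by (metis (mono_tags, lifting) funpow_0 mem_Collect_eq)
  have ai: "is_m_cycle m (alpha m \<gamma> q i)" using cyc i(2) by blast
  obtain q' where q': "q = Some q'" "q' \<in> {1..m-1}"
  proof (cases q)
    case None
    then have "alpha m \<gamma> q i (i + 1) = i + 1" by (simp add: alpha_def)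
    then show ?thesis using is_m_cycle_no_fixpoint[OF ai m] i(1) by auto
  qed (use q in auto)
  define p where "p = \<gamma> \<circ> Transposition.transpose q' m"
  have "i < m" using i(1) by auto
  then have p: "is_m_cycle m p"
    using ai is_m_cycle_alpha_Some_iff[OF \<gamma> q'(2)] unfolding p_def q'(1) by blast
  have "is_m_cycle (m - 1) \<gamma>" using is_m_cycle_remove_point[OF _ \<gamma>] p unfolding p_def .
  then have "v = {1..m-1}" using is_cycle_of_m_cycle_iff v m by simp
  then have "x = basis_el (alpha m \<gamma> q 0) - basis_el (alpha m \<gamma> q (m - 1))"
    using vass_full_line_telescope x m by simp
  also have "\<dots> = basis_el (conj_rotation m p) - basis_el p"
    using alpha_Some_first[OF \<gamma> q'(2)] alpha_Some_last[OF \<gamma> q'(2)] unfolding p_def q'(1) by simp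
  finally show ?thesis using p by blast
qed

lemma rotation_difference_mem_vass_cyc:
  assumes m: "2 \<le> m" and p: "is_m_cycle m p"
  shows "basis_el (conj_rotation m p) - basis_el p \<in> vass_cyc m"
proof -
  have pp: "p permutes {1..m}" using p by (simp add: is_m_cycle_def)
  obtain q where qp: "p q = m" using permutes_surj[OF pp] by (metis surjD)
  have "q \<in> {1..m}" using qp permutes_not_in[OF pp] m by fastforce
  moreover have "p m \<noteq> m" using is_m_cycle_no_fixpoint[OF p m, of m] m by simp
  then have "q \<noteq> m" using qp by auto
  ultimately have q: "q \<in> {1..m-1}" by auto
  define \<gamma> where "\<gamma> = p \<circ> Transposition.transpose q m"
  have \<gamma>p: "\<gamma> \<circ> Transposition.transpose q m = p" unfolding \<gamma>_def by (simp add: comp_assoc)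
  have \<gamma>_m: "\<gamma> m = m" unfolding \<gamma>_def using qp by simp
  have "\<gamma> permutes {1..m}" unfolding \<gamma>_def using q m by (intro permutes_compose pp permutes_swap_id) auto
  then have \<gamma>: "\<gamma> permutes {1..m-1}"
  proof (rule permutes_superset)
    fix x assume "x \<in> {1..m} - {1..m-1}"
    then have "x = m" by auto
    then show "\<gamma> x = x" using \<gamma>_m by simp
  qed
  have cyc: "is_m_cycle m (alpha m \<gamma> (Some q) t)" if "t < m" for t
    using is_m_cycle_alpha_Some_iff[OF \<gamma> q that] \<gamma>p p by simp
  have "is_m_cycle (m - 1) \<gamma>" using is_m_cycle_remove_point[OF _ \<gamma>] p unfolding \<gamma>p[symmetric] .
  then have v: "is_cycle_of (m - 1) \<gamma> {1..m-1}" using is_cycle_of_m_cycle_iff m by simp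
  have "vass m \<gamma> (Some q) {1..m-1} = basis_el (conj_rotation m p) - basis_el p"
    using vass_full_line_telescope[of m] alpha_Some_first[OF \<gamma> q] alpha_Some_last[OF \<gamma> q] \<gamma>p m by simp
  moreover have "\<forall>j\<in>{1..m-1}. is_m_cycle m (alpha m \<gamma> (Some q) (j - 1)) \<and>
      is_m_cycle m (alpha m \<gamma> (Some q) j)"
    using cyc by auto
  ultimately show ?thesis unfolding vass_cyc_def mem_Collect_eq using \<gamma> q v
    by (intro exI[of _ \<gamma>] exI[of _ "Some q"] exI[of _ "{1..m-1}"]) simp
qed

lemma vass_cyc_eq_rotation_differences:
  assumes "2 \<le> m"
  shows "vass_cyc m = (\<lambda>p. basis_el (conj_rotation m p) - basis_el p) ` {p. is_m_cycle m p}"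
  using vass_cyc_subset_rotation_differences[OF assms] rotation_difference_mem_vass_cyc[OF assms] by blast

section \<open>Counting m-cycles\<close>

lemma cycle_of_list_funpow_nth:
  assumes "distinct L" "a < length L"
  shows "(cycle_of_list L ^^ n) (L ! a) = L ! ((n + a) mod length L)"
proof -
  have "(cycle_of_list L ^^ n) (L ! a) = map (cycle_of_list L ^^ n) L ! a"
    using assms by simp
  also have "\<dots> = rotate n L ! a" using cyclic_rotation[OF assms(1)] by simp
  also have "\<dots> = L ! ((n + a) mod length L)" using nth_rotate[OF assms(2)] by simp
  finally show ?thesis .
qed

lemma is_m_cycle_cycle_of_list:
  assumes "distinct L" "set L = {1..m}"
  shows "is_m_cycle m (cycle_of_list L)"
  unfolding is_m_cycle_def
proof (intro conjI ballI)
  have len: "length L = m" using distinct_card[OF assms(1)] assms(2) by simp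
  show "cycle_of_list L permutes {1..m}" using cycle_permutes[of L] assms(2) by simp
  fix i j assume "i \<in> {1..m}" "j \<in> {1..m}"
  then obtain a b where ab: "a < m" "b < m" "i = L ! a" "j = L ! b"
    using assms(2) len by (metis in_set_conv_nth)
  have "(cycle_of_list L ^^ (b + m - a)) i = L ! ((b + m - a + a) mod m)"
    using cycle_of_list_funpow_nth[OF assms(1), of a] ab len by simp
  also have "(b + m - a + a) mod m = b" using ab by simp
  finally show "\<exists>k. (cycle_of_list L ^^ k) i = j" using ab by blast
qed

lemma cycle_of_list_Cons_recover:
  assumes "distinct (m # xs)" "length xs = m - 1" "0 < m"
  shows "xs = map (\<lambda>k. (cycle_of_list (m # xs) ^^ Suc k) m) [0..<m-1]"
proof (rule nth_equalityI)
  fix k assume k: "k < length xs"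
  have "(cycle_of_list (m # xs) ^^ Suc k) ((m # xs) ! 0) = (m # xs) ! (Suc k mod m)"
    using cycle_of_list_funpow_nth[OF assms(1), of 0 "Suc k"] assms(2,3) by simp
  then show "xs ! k = map (\<lambda>k. (cycle_of_list (m # xs) ^^ Suc k) m) [0..<m-1] ! k"
    using k assms(2) by simp
qed (use assms(2) in simp)

lemma set_support_m_cycle:
  assumes p: "is_m_cycle m p" and m: "0 < m"
  shows "set (support p m) = {1..m}"
proof -
  have pp: "p permutes {1..m}" using p by (simp add: is_m_cycle_def)
  have "range (\<lambda>i. (p ^^ i) m) = {1..m}"
  proof
    show "range (\<lambda>i. (p ^^ i) m) \<subseteq> {1..m}"
      using permutes_in_image[OF permutes_funpow[OF pp]] m by auto
    show "{1..m} \<subseteq> range (\<lambda>i. (p ^^ i) m)"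
      using p m unfolding is_m_cycle_def by (metis atLeastAtMost_iff le_refl less_one not_le rangeI subsetI)
  qed
  moreover have "permutation p" using pp permutation_permutes by blast
  ultimately show ?thesis by (simp only: support_set)
qed

lemma cycle_of_list_support_m_cycle:
  assumes p: "is_m_cycle m p" and m: "0 < m"
  shows "cycle_of_list (support p m) = p"
proof
  fix y
  have pp: "p permutes {1..m}" using p by (simp add: is_m_cycle_def)
  have perm: "permutation p" using pp permutation_permutes by blast
  define L where "L = support p m"
  have dL: "distinct L" unfolding L_def by (rule cycle_of_permutation[OF perm])
  have sL: "set L = {1..m}" unfolding L_def by (rule set_support_m_cycle[OF p m])
  have lL: "length L = m" using distinct_card[OF dL] sL by simp
  then have lp: "least_power p m = m" unfolding L_def by simp
  have Lnth: "L ! a = (p ^^ a) m" if "a < m" for a using that lp unfolding L_def by simp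
  show "cycle_of_list L y = p y"
  proof (cases "y \<in> set L")
    case True
    then obtain a where a: "a < m" "y = L ! a" using lL by (metis in_set_conv_nth)
    have "cycle_of_list L y = L ! (Suc a mod m)"
      using cycle_of_list_funpow_nth[OF dL, of a 1] a lL by simp
    also have "\<dots> = (p ^^ Suc a) m"
    proof (cases "Suc a < m")
      case True
      then show ?thesis using Lnth by simp
    next
      case False
      then have "Suc a = m" using a by simp
      then show ?thesis using Lnth[of 0] m lp least_power_of_permutation(1)[OF perm, of m] by simp
    qed
    also have "\<dots> = p y" using a Lnth by simp
    finally show ?thesis .
  next
    case False
    then show ?thesis using id_outside_supp[OF False] pp sL by (simp add: permutes_not_in)
  qed
qed

lemma m_cycle_eq_cycle_of_list:
  assumes p: "is_m_cycle m p" and m: "0 < m"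
  shows "\<exists>xs \<in> permutations_of_set {1..m-1}. p = cycle_of_list (m # xs)"
proof -
  define L where "L = support p m"
  have perm: "permutation p" using p permutation_permutes unfolding is_m_cycle_def by blast
  have dL: "distinct L" unfolding L_def by (rule cycle_of_permutation[OF perm])
  have sL: "set L = {1..m}" unfolding L_def by (rule set_support_m_cycle[OF p m])
  have lL: "length L = m" using distinct_card[OF dL] sL by simp
  then have "L ! 0 = m" using m unfolding L_def by simp
  then have L0: "L = m # tl L" using lL m by (cases L) auto
  have "distinct (m # tl L)" "set (m # tl L) = {1..m}" using dL sL L0 by metis+
  then have "distinct (tl L)" "set (tl L) = {1..m} - {m}" by auto
  moreover have "{1..m} - {m} = {1..m-1}" by auto
  ultimately have "tl L \<in> permutations_of_set {1..m-1}" unfolding permutations_of_set_def by simp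
  moreover have "p = cycle_of_list (m # tl L)"
    using cycle_of_list_support_m_cycle[OF p m] L0 unfolding L_def by metis
  ultimately show ?thesis by blast
qed

lemma card_m_cycles:
  assumes "0 < m"
  shows "card {p. is_m_cycle m p} = fact (m - 1)"
proof -
  have perm: "distinct (m # xs)" "set (m # xs) = {1..m}" "length xs = m - 1"
    if "xs \<in> permutations_of_set {1..m-1}" for xs
    using that assms unfolding permutations_of_set_def
    by (auto simp: distinct_card[symmetric])
  have "{p. is_m_cycle m p} = (\<lambda>xs. cycle_of_list (m # xs)) ` permutations_of_set {1..m-1}"
    using m_cycle_eq_cycle_of_list[OF _ assms] is_m_cycle_cycle_of_list perm by blast
  moreover have "inj_on (\<lambda>xs. cycle_of_list (m # xs)) (permutations_of_set {1..m-1})"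
    by (rule inj_onI) (metis cycle_of_list_Cons_recover perm(1,3) assms)
  ultimately show ?thesis by (simp add: card_image)
qed

lemma finite_m_cycles: "finite {p. is_m_cycle m p}"
  by (rule finite_subset[OF _ finite_permutations[of "{1..m}"]]) (auto simp: is_m_cycle_def)

section \<open>Conjugation by the rotation\<close>

lemma funpow_rotation:
  assumes "y \<in> {1..m}"
  shows "(rotation m 0 ^^ k) y = (y - 1 + k) mod m + 1"
proof (induction k)
  case 0
  have "y - 1 < m" using assms by auto
  then show ?case using assms by simp
next
  case (Suc k)
  define z where "z = (y - 1 + k) mod m"
  have "z < m" unfolding z_def using assms by simp
  then have "rotation m 0 (z + 1) = (y - 1 + Suc k) mod m + 1"
    unfolding z_def by (auto simp: rotation_def mod_Suc)
  then show ?case using Suc by (simp add: z_def)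
qed

lemma funpow_rotation_period: "0 < m \<Longrightarrow> rotation m 0 ^^ m = id"
proof
  fix y assume m: "0 < m"
  show "(rotation m 0 ^^ m) y = id y"
  proof (cases "y \<in> {1..m}")
    case True
    have "y - 1 < m" using True by auto
    then have "(y - 1 + m) mod m = y - 1" by (simp only: mod_add_self2 mod_less)
    then show ?thesis using funpow_rotation[OF True, of m] True by simp
  next
    case False
    then show ?thesis using permutes_not_in[OF permutes_funpow[OF rotation_permutes[OF m]]] by simp
  qed
qed

lemma funpow_conj_rotation:
  "(conj_rotation m ^^ k) p = (rotation m 0 ^^ k) \<circ> p \<circ> (inv (rotation m 0) ^^ k)"
  by (induction k) (simp_all add: conj_rotation_def fun_eq_iff funpow_swap1)

lemma conj_rotation_period:
  assumes "0 < m"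
  shows "(conj_rotation m ^^ m) p = p"
proof -
  have "bij (rotation m 0)" using permutes_bij[OF rotation_permutes[OF assms]] .
  then have "inv (rotation m 0) ^^ m = inv (rotation m 0 ^^ m)" by (simp add: inv_fn)
  then show ?thesis using funpow_rotation_period[OF assms] by (simp add: funpow_conj_rotation)
qed

lemma is_m_cycle_conj_rotation: "is_m_cycle m p \<Longrightarrow> 0 < m \<Longrightarrow> is_m_cycle m (conj_rotation m p)"
  unfolding conj_rotation_def by (rule is_m_cycle_conj[OF _ rotation_permutes])

text \<open>The orbits of a power c^k, 0 < k < m, have sizes dividing the prime m, and c^k has no
  fixed point.\<close>
lemma is_m_cycle_funpow_rotation:
  assumes m: "prime m" and k: "0 < k" "k < m"
  shows "is_m_cycle m (rotation m 0 ^^ k)"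
  unfolding is_m_cycle_def
proof (intro conjI ballI)
  have m0: "0 < m" using prime_gt_0_nat[OF m] .
  let ?f = "rotation m 0 ^^ k"
  show perm: "?f permutes {1..m}" by (rule permutes_funpow[OF rotation_permutes[OF m0]])
  fix i j assume i: "i \<in> {1..m}" and j: "j \<in> {1..m}"
  have "?f ^^ m = (rotation m 0 ^^ m) ^^ k" unfolding funpow_mult by (simp add: mult.commute)
  then have "(?f ^^ m) i = i" using funpow_rotation_period[OF m0] by simp
  moreover have "?f i \<noteq> i"
  proof
    assume "?f i = i"
    moreover have "1 \<le> i" using i by simp
    ultimately have eq: "(i - 1 + k) mod m = i - 1" using funpow_rotation[OF i, of k] by linarith
    show False
    proof (cases "i - 1 + k < m")
      case True
      then show False using eq k by simp
    next
      case False
      then have "(i - 1 + k) mod m = (i - 1 + k - m) mod m" by (simp add: le_mod_geq)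
      also have "\<dots> = i - 1 + k - m" using i k by (intro mod_less) auto
      finally show False using eq k False by linarith
    qed
  qed
  ultimately have "card (orbit ?f i) = m" by (rule card_orbit_prime_period[OF m])
  moreover have "orbit ?f i \<subseteq> {1..m}"
    using orbit_subset_of_closed[of ?f "{1..m}" i] i permutes_image[OF perm] by simp
  ultimately have "orbit ?f i = {1..m}" by (simp add: card_subset_eq)
  then have "j \<in> {(?f ^^ n) i | n. 0 < n}" using j orbit_altdef[of ?f i] by simp
  then show "\<exists>n. (?f ^^ n) i = j" by blast
qed

lemma conj_rotation_funpow_rotation:
  assumes "0 < m"
  shows "conj_rotation m (rotation m 0 ^^ n) = rotation m 0 ^^ n"
proof -
  have "rotation m 0 \<circ> rotation m 0 ^^ n = rotation m 0 ^^ n \<circ> rotation m 0"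
    by (metis funpow.simps(2) funpow_Suc_right)
  then have "conj_rotation m (rotation m 0 ^^ n) = (rotation m 0 ^^ n) \<circ> (rotation m 0 \<circ> inv (rotation m 0))"
    unfolding conj_rotation_def by (simp add: comp_assoc)
  then show ?thesis using permutes_inv_o(1)[OF rotation_permutes[OF assms]] by simp
qed

lemma conj_rotation_fixed_apply:
  assumes "conj_rotation m p = p" "y \<in> {1..m}"
  shows "p y = (rotation m 0 ^^ (y - 1)) (p 1)"
proof -
  have "0 < m" using assms(2) by simp
  have "rotation m 0 \<circ> p \<circ> inv (rotation m 0) \<circ> rotation m 0 = p \<circ> rotation m 0"
    using assms(1) unfolding conj_rotation_def by simp
  then have "rotation m 0 \<circ> p = p \<circ> rotation m 0"
    using permutes_inv_o(2)[OF rotation_permutes[OF \<open>0 < m\<close>]] by (simp add: comp_assoc)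
  then have "p (rotation m 0 z) = rotation m 0 (p z)" for z by (metis comp_apply)
  then have "p ((rotation m 0 ^^ k) z) = (rotation m 0 ^^ k) (p z)" for k z
    by (induction k arbitrary: z) simp_all
  moreover have "(rotation m 0 ^^ (y - 1)) 1 = y" using funpow_rotation[of 1 m "y - 1"] assms(2) by auto
  ultimately show ?thesis by metis
qed

lemma image_m_cycles_fixed_by_conj_rotation:
  assumes m: "prime m"
  shows "(\<lambda>p. p 1) ` {p. is_m_cycle m p \<and> conj_rotation m p = p} = {2..m}"
proof
  have m0: "0 < m" "2 \<le> m" using prime_gt_1_nat[OF m] by auto
  show "(\<lambda>p. p 1) ` {p. is_m_cycle m p \<and> conj_rotation m p = p} \<subseteq> {2..m}"
  proof
    fix j assume "j \<in> (\<lambda>p. p 1) ` {p. is_m_cycle m p \<and> conj_rotation m p = p}"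
    then obtain p where p: "is_m_cycle m p" "j = p 1" by blast
    have "p 1 \<in> {1..m}"
      using permutes_in_image[of p "{1..m}" 1] p(1) m0 unfolding is_m_cycle_def by simp
    moreover have "p 1 \<noteq> 1" using is_m_cycle_no_fixpoint[OF p(1) m0(2), of 1] m0 by simp
    ultimately show "j \<in> {2..m}" using p(2) by auto
  qed
  show "{2..m} \<subseteq> (\<lambda>p. p 1) ` {p. is_m_cycle m p \<and> conj_rotation m p = p}"
  proof
    fix j assume j: "j \<in> {2..m}"
    then have "rotation m 0 ^^ (j - 1) \<in> {p. is_m_cycle m p \<and> conj_rotation m p = p}"
      using is_m_cycle_funpow_rotation[OF m, of "j - 1"] conj_rotation_funpow_rotation[OF m0(1)] by auto
    moreover have "(rotation m 0 ^^ (j - 1)) 1 = j" using funpow_rotation[of 1 m "j - 1"] j by auto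
    ultimately show "j \<in> (\<lambda>p. p 1) ` {p. is_m_cycle m p \<and> conj_rotation m p = p}"
      by (intro image_eqI[of j _ "rotation m 0 ^^ (j - 1)"]) simp_all
  qed
qed

text \<open>A fixed point of the conjugation commutes with the rotation, so it is determined by its
  value at 1; these are exactly the powers of the rotation.\<close>
lemma card_m_cycles_fixed_by_conj_rotation:
  assumes "prime m"
  shows "card {p. is_m_cycle m p \<and> conj_rotation m p = p} = m - 1"
proof -
  have "inj_on (\<lambda>p. p 1) {p. is_m_cycle m p \<and> conj_rotation m p = p}"
  proof (rule inj_onI)
    fix p p' assume p: "p \<in> {p. is_m_cycle m p \<and> conj_rotation m p = p}"
      "p' \<in> {p. is_m_cycle m p \<and> conj_rotation m p = p}" "p 1 = p' 1"
    show "p = p'"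
    proof
      fix y
      show "p y = p' y"
      proof (cases "y \<in> {1..m}")
        case True
        then show ?thesis using conj_rotation_fixed_apply[of m p y] conj_rotation_fixed_apply[of m p' y] p
          by simp
      next
        case False
        have "p permutes {1..m}" "p' permutes {1..m}" using p(1,2) unfolding is_m_cycle_def by auto
        then show ?thesis using False by (simp add: permutes_not_in)
      qed
    qed
  qed
  then show ?thesis using card_image image_m_cycles_fixed_by_conj_rotation[OF assms] by fastforce
qed

section \<open>The dimension of the quotient\<close>

interpretation V: vector_space cscale
  by unfold_locales (auto simp: cscale_def fun_eq_iff algebra_simps)

lemma independent_basis_el: "V.independent (basis_el ` A)"
proof (subst V.independent_explicit_module, intro allI impI)
  fix T u v
  assume T: "finite T" "T \<subseteq> basis_el ` A" "(\<Sum>w\<in>T. cscale (u w) w) = 0" "v \<in> T"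
  then obtain p where p: "v = basis_el p" by auto
  have "(\<Sum>w\<in>T. u w * w p) = (\<Sum>w\<in>T. cscale (u w) w) p"
    by (induction T rule: infinite_finite_induct) (simp_all add: cscale_def)
  also have "\<dots> = 0" using T(3) by simp
  finally have sum0: "(\<Sum>w\<in>T. u w * w p) = 0" .
  have "w p = 0" if "w \<in> T - {v}" for w
    using that T(2) p by (auto simp: basis_el_def)
  then have "(\<Sum>w\<in>T. u w * w p) = u v * v p"
    using sum.remove[OF T(1,4), of "\<lambda>w. u w * w p"] by (simp add: sum.neutral)
  then show "u v = 0" using sum0 p by (simp add: basis_el_def)
qed

lemma inj_basis_el: "inj basis_el"
  unfolding inj_def basis_el_def fun_eq_iff by (metis one_neq_zero)

lemma m_cycles_closed_conj_rotation:
  "0 < m \<Longrightarrow> conj_rotation m ` {p. is_m_cycle m p} \<subseteq> {p. is_m_cycle m p}"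
  using is_m_cycle_conj_rotation by auto

lemma dimH_eq_card_orbits:
  assumes m: "2 \<le> m"
  shows "dimH m = card (orbit (conj_rotation m) ` {p. is_m_cycle m p})"
proof -
  define Cy where "Cy = {p. is_m_cycle m p}"
  have "{basis_el p | p. is_m_cycle m p} = basis_el ` Cy" unfolding Cy_def by auto
  then have "V.dim (cycle_span m) = card Cy"
    unfolding cycle_span_def V.dim_span
    using V.dim_eq_card_independent[OF independent_basis_el] card_image[OF inj_on_subset[OF inj_basis_el]]
    by simp
  moreover have "V.dim (V.span (vass_cyc m)) + card (orbit (conj_rotation m) ` Cy) = card Cy"
    unfolding V.dim_span vass_cyc_eq_rotation_differences[OF m] Cy_def
    using m by (intro V.dim_orbit_differences_add_card_orbits finite_m_cycles
        m_cycles_closed_conj_rotation self_in_orbit_of_periodic[OF conj_rotation_period]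
        independent_basis_el inj_on_subset[OF inj_basis_el]) auto
  ultimately show ?thesis unfolding dimH_def Cy_def by simp
qed

lemma card_orbits_conj_rotation:
  assumes "prime m"
  shows "m * card (orbit (conj_rotation m) ` {p. is_m_cycle m p}) = fact (m - 1) + (m - 1) * (m - 1)"
proof -
  have "0 < m" using prime_gt_0_nat[OF assms] .
  then show ?thesis
    using card_orbits_prime_period[OF finite_m_cycles m_cycles_closed_conj_rotation assms conj_rotation_period]
      card_m_cycles card_m_cycles_fixed_by_conj_rotation[OF assms]
    by simp
qed

theorem mainTheorem19:
  fixes m :: nat
  assumes "prime m"
  shows "real (dimH m) = (fact (m - 1) - real (m - 1)) / real m + real m - 1"
proof -
  have m: "2 \<le> m" using prime_ge_2_nat[OF assms] .
  have "real m * real (dimH m) = fact (m - 1) + real (m - 1) * real (m - 1)"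
    using card_orbits_conj_rotation[OF assms] unfolding dimH_eq_card_orbits[OF m]
    by (metis of_nat_add of_nat_fact of_nat_mult)
  moreover have "real (m - 1) = real m - 1" using m by (simp add: of_nat_diff)
  ultimately have "real (dimH m) = (fact (m - 1) + (real m - 1) * (real m - 1)) / real m"
    using m by (simp add: eq_divide_eq mult.commute)
  also have "\<dots> = (fact (m - 1) - real (m - 1)) / real m + real m - 1"
    using m by (simp add: field_simps of_nat_diff)
  finally show ?thesis .
qed

end
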